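(* In the setting described in the context, let $q\in\{1,\dots,n\}$ and assume there exists $A'\subseteq\mathcal C$ with $|A'|=n-q$ and $f(A')=0$. Define $\mu_\wedge:2^{\mathcal C}\to L$ by $\mu_\wedge(\mathcal C)=1$, $\mu_\wedge(X)=f(X)$ if $n-q\le|X|<n$, and $\mu_\wedge(X)=\min_{Y\supsetneq X,\ n-q\le|Y|<n}f(Y)$ if $|X|<n-q$. Then $\mu_\wedge$ is a $q$-minitive capacity on $\mathcal C$.
   Context: Let $\mathcal C=\{1,\dots,n\}$ and let $L$ be either a finite totally ordered set $0=\xi_1<\dots<\xi_l=1$ or $L=[0,1]$. Training data: $N$ pairs $(x^{(k)},\alpha^{(k)})$ with $x^{(k)}\in L^n$, $\alpha^{(k)}\in L$. For $B\subsetneq\mathcal C$, $\gamma_{k,B}=\max_{i\in\mathcal C\setminus B}x^{(k)}_i$ and $f(B)=\max_{1\le k\le N}(\gamma_{k,B}\,\epsilon\,\alpha^{(k)})$ where $a\,\epsilon\,b=b$ if $a<b$ and $a\,\epsilon\,b=0$ if $a\ge b$. A capacity is a map $\mu:2^{\mathcal C}\to L$ with $\mu(\emptyset)=0$, $\mu(\mathcal C)=1$, monotone for inclusion; it is $q$-minitive if for all $X$ with $|X|<n-q$, $\mu(X)=\min_{Y\supsetneq X,\ |Y|\ge n-q}\mu(Y)$. *)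

theory Defs
  imports Complex_Main
begin

text \<open>Criteria set C = {1..n}; values in L, a subset of the reals
  (either the interval [0,1] or a finite chain 0 = xi_1 < ... < xi_l = 1).
  Training data: x k i (for 1 <= k <= N, i in C) and alpha k.\<close>

definition eps_op :: "real \<Rightarrow> real \<Rightarrow> real" where
  "eps_op a b = (if a < b then b else 0)"

definition gamma_kB :: "nat \<Rightarrow> (nat \<Rightarrow> nat \<Rightarrow> real) \<Rightarrow> nat \<Rightarrow> nat set \<Rightarrow> real" where
  "gamma_kB n x k B = Max ((x k) ` ({1..n} - B))"

definition f_data :: "nat \<Rightarrow> nat \<Rightarrow> (nat \<Rightarrow> nat \<Rightarrow> real) \<Rightarrow> (nat \<Rightarrow> real) \<Rightarrow> nat set \<Rightarrow> real" where
  "f_data n N x alpha B = Max ((\<lambda>k. eps_op (gamma_kB n x k B) (alpha k)) ` {1..N})"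

definition is_capacity :: "nat \<Rightarrow> real set \<Rightarrow> (nat set \<Rightarrow> real) \<Rightarrow> bool" where
  "is_capacity n L \<mu> \<longleftrightarrow>
     (\<forall>X. X \<subseteq> {1..n} \<longrightarrow> \<mu> X \<in> L) \<and> \<mu> {} = 0 \<and> \<mu> {1..n} = 1 \<and>
     (\<forall>X Y. X \<subseteq> Y \<and> Y \<subseteq> {1..n} \<longrightarrow> \<mu> X \<le> \<mu> Y)"

definition q_minitive :: "nat \<Rightarrow> nat \<Rightarrow> (nat set \<Rightarrow> real) \<Rightarrow> bool" where
  "q_minitive n q \<mu> \<longleftrightarrow>
     (\<forall>X. X \<subseteq> {1..n} \<and> card X < n - q \<longrightarrow>
        \<mu> X = Min {\<mu> Y | Y. X \<subset> Y \<and> Y \<subseteq> {1..n} \<and> n - q \<le> card Y})"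

definition mu_wedge :: "nat \<Rightarrow> nat \<Rightarrow> (nat set \<Rightarrow> real) \<Rightarrow> nat set \<Rightarrow> real" where
  "mu_wedge n q f X =
     (if X = {1..n} then 1
      else if n - q \<le> card X then f X
      else Min {f Y | Y. X \<subset> Y \<and> Y \<subseteq> {1..n} \<and> n - q \<le> card Y \<and> card Y < n})"

end

theory Submission
  imports Defs
begin

text \<open>Since \<open>f\<close> is monotone on
  proper subsets (shrinking the complement lowers every \<open>\<gamma>\<^sub>k\<^sub>,\<^sub>B\<close>), the result is monotone;
  a zero of \<open>f\<close> on a set of size \<open>n - q\<close> forces \<open>\<mu>(\<emptyset>) = 0\<close>; and \<open>q\<close>-minitivity holds
  because the value \<open>1\<close> of the top element never lowers the minimum over the layer.\<close>

definition wedge_candidates :: "nat \<Rightarrow> nat \<Rightarrow> nat set \<Rightarrow> nat set set" where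
  "wedge_candidates n q X = {Y. X \<subset> Y \<and> Y \<subseteq> {1..n} \<and> n - q \<le> card Y \<and> card Y < n}"

lemma mu_wedge_eq:
  "mu_wedge n q F X =
     (if X = {1..n} then 1
      else if n - q \<le> card X then F X
      else Min (F ` wedge_candidates n q X))"
  unfolding mu_wedge_def wedge_candidates_def by (simp add: image_Collect)

lemma card_less_iff_ne_atLeastAtMost:
  assumes "Y \<subseteq> {1..n}"
  shows "card Y < n \<longleftrightarrow> Y \<noteq> {1..n}"
proof -
  have "card Y \<le> n"
    using assms card_mono[of "{1..n}" Y] by simp
  moreover have "card Y = n \<longleftrightarrow> Y = {1..n}"
    using assms card_subset_eq[of "{1..n}" Y] by auto
  ultimately show ?thesis by linarith
qed

lemma finite_wedge_candidates: "finite (wedge_candidates n q X)"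
  by (rule finite_subset[of _ "Pow {1..n}"]) (auto simp: wedge_candidates_def)

lemma wedge_candidates_nonempty:
  assumes X: "X \<subseteq> {1..n}" "card X < n - q" and q: "1 \<le> q"
  shows "wedge_candidates n q X \<noteq> {}"
proof -
  obtain Y where Y: "X \<subseteq> Y" "Y \<subseteq> {1..n}" "card Y = n - q"
    using exists_subset_between[of X "n - q" "{1..n}"] X by auto
  then have "Y \<in> wedge_candidates n q X"
    using X q by (auto simp: wedge_candidates_def)
  then show ?thesis by blast
qed

lemma Min_wedge_candidates_in:
  assumes "X \<subseteq> {1..n}" "card X < n - q" "1 \<le> q"
    and F: "\<And>B. B \<subseteq> {1..n} \<Longrightarrow> F B \<in> S"
  shows "Min (F ` wedge_candidates n q X) \<in> S"
proof -
  have "Min (F ` wedge_candidates n q X) \<in> F ` wedge_candidates n q X"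
    using assms by (simp add: Min_in finite_wedge_candidates wedge_candidates_nonempty)
  then show ?thesis
    using F by (auto simp: wedge_candidates_def)
qed

lemma mu_wedge_range:
  assumes F: "\<And>B. B \<subseteq> {1..n} \<Longrightarrow> F B \<in> L" and "1 \<in> L" and q: "1 \<le> q"
    and X: "X \<subseteq> {1..n}"
  shows "mu_wedge n q F X \<in> L"
proof -
  have "Min (F ` wedge_candidates n q X) \<in> L" if "card X < n - q"
    using Min_wedge_candidates_in[OF X that q F] .
  then show ?thesis
    using assms by (auto simp: mu_wedge_eq)
qed

lemma mu_wedge_empty:
  assumes q: "q \<in> {1..n}"
    and A: "A \<subseteq> {1..n}" "card A = n - q" "F A = 0"
    and F_nonneg: "\<And>B. B \<subseteq> {1..n} \<Longrightarrow> 0 \<le> F B"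
  shows "mu_wedge n q F {} = 0"
proof (cases "q = n")
  case True
  then have "A = {}"
    using A by (simp add: finite_subset)
  then show ?thesis
    using A q True by (simp add: mu_wedge_eq)
next
  case False
  then have "A \<in> wedge_candidates n q {}"
    using A q by (auto simp: wedge_candidates_def)
  then have "Min (F ` wedge_candidates n q {}) \<le> 0"
    using A(3) finite_wedge_candidates by (metis Min_le finite_imageI imageI)
  moreover have "0 \<le> Min (F ` wedge_candidates n q {})"
    using Min_wedge_candidates_in[of "{}" n q F "{0..}"] False q F_nonneg by auto
  ultimately show ?thesis
    using False q by (auto simp: mu_wedge_eq)
qed

lemma mu_wedge_mono:
  assumes F_mono: "\<And>B B'. B \<subseteq> B' \<Longrightarrow> B' \<subset> {1..n} \<Longrightarrow> F B \<le> F B'"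
    and F_le_1: "\<And>B. B \<subseteq> {1..n} \<Longrightarrow> F B \<le> 1"
    and q: "1 \<le> q"
    and XY: "X \<subseteq> Y" "Y \<subseteq> {1..n}"
  shows "mu_wedge n q F X \<le> mu_wedge n q F Y"
proof (cases "Y = {1..n}")
  case True
  have "mu_wedge n q F X \<in> {..1}"
    using mu_wedge_range[of n F "{..1}"] F_le_1 q XY by auto
  then show ?thesis
    using True by (simp add: mu_wedge_eq)
next
  case False
  then have Y: "Y \<subset> {1..n}" "card Y < n"
    using XY card_less_iff_ne_atLeastAtMost[OF XY(2)] by auto
  have cXY: "card X \<le> card Y"
    using XY by (meson card_mono finite_atLeastAtMost finite_subset)
  consider "n - q \<le> card X" | "card X < n - q" "n - q \<le> card Y" | "card Y < n - q"
    by linarith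
  then show ?thesis
  proof cases
    case 1
    then show ?thesis
      using Y cXY F_mono[OF XY(1) Y(1)] by (auto simp: mu_wedge_eq)
  next
    case 2
    then have "Y \<in> wedge_candidates n q X"
      using XY Y by (auto simp: wedge_candidates_def)
    then show ?thesis
      using 2 Y by (auto simp: mu_wedge_eq finite_wedge_candidates)
  next
    case 3
    have "wedge_candidates n q Y \<subseteq> wedge_candidates n q X"
      using XY(1) by (auto simp: wedge_candidates_def)
    then have "Min (F ` wedge_candidates n q X) \<le> Min (F ` wedge_candidates n q Y)"
      using 3 XY q
      by (intro Min_antimono image_mono) (auto simp: finite_wedge_candidates wedge_candidates_nonempty)
    then show ?thesis
      using 3 cXY Y by (auto simp: mu_wedge_eq)
  qed
qed

lemma mu_wedge_q_minitive:
  assumes F_le_1: "\<And>B. B \<subseteq> {1..n} \<Longrightarrow> F B \<le> 1" and q: "1 \<le> q"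
  shows "q_minitive n q (mu_wedge n q F)"
  unfolding q_minitive_def
proof (intro allI impI, elim conjE)
  fix X assume X: "X \<subseteq> {1..n}" "card X < n - q"
  let ?M = "F ` wedge_candidates n q X"
  have "{Y. X \<subset> Y \<and> Y \<subseteq> {1..n} \<and> n - q \<le> card Y} =
        insert {1..n} (wedge_candidates n q X)"
    using X card_less_iff_ne_atLeastAtMost card_mono[of "{1..n}" X]
    by (auto simp: wedge_candidates_def)
  then have "{mu_wedge n q F Y | Y. X \<subset> Y \<and> Y \<subseteq> {1..n} \<and> n - q \<le> card Y} =
        mu_wedge n q F ` insert {1..n} (wedge_candidates n q X)"
    by (simp flip: image_Collect)
  also have "\<dots> = insert 1 ?M"
    by (auto simp: wedge_candidates_def mu_wedge_eq)
  finally have layer: "{mu_wedge n q F Y | Y. X \<subset> Y \<and> Y \<subseteq> {1..n} \<and> n - q \<le> card Y} =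
      insert 1 ?M" .
  have "Min ?M \<le> 1"
    using Min_wedge_candidates_in[OF X q, of F "{..1}"] F_le_1 by auto
  then have "Min (insert 1 ?M) = Min ?M"
    using X q by (simp add: finite_wedge_candidates wedge_candidates_nonempty)
  then show "mu_wedge n q F X =
      Min {mu_wedge n q F Y | Y. X \<subset> Y \<and> Y \<subseteq> {1..n} \<and> n - q \<le> card Y}"
    using X layer by (auto simp: mu_wedge_eq)
qed

lemma is_capacity_mu_wedge:
  assumes q: "q \<in> {1..n}"
    and F_range: "\<And>B. B \<subseteq> {1..n} \<Longrightarrow> F B \<in> L" and L: "1 \<in> L" "L \<subseteq> {0..1}"
    and F_mono: "\<And>B B'. B \<subseteq> B' \<Longrightarrow> B' \<subset> {1..n} \<Longrightarrow> F B \<le> F B'"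
    and A: "A \<subseteq> {1..n}" "card A = n - q" "F A = 0"
  shows "is_capacity n L (mu_wedge n q F)"
proof -
  have F_01: "0 \<le> F B" "F B \<le> 1" if "B \<subseteq> {1..n}" for B
    using F_range[OF that] L by auto
  have "mu_wedge n q F X \<in> L" if "X \<subseteq> {1..n}" for X
    using mu_wedge_range[OF F_range L(1) _ that] q by auto
  moreover have "mu_wedge n q F {} = 0"
    using mu_wedge_empty[of q n A F] q A F_01(1) by blast
  moreover have "mu_wedge n q F X \<le> mu_wedge n q F Y"
    if "X \<subseteq> Y" "Y \<subseteq> {1..n}" for X Y
    using mu_wedge_mono[OF F_mono F_01(2) _ that] q by auto
  ultimately show ?thesis
    unfolding is_capacity_def by (simp add: mu_wedge_eq)
qed

lemma gamma_kB_antimono: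
  assumes "B \<subseteq> B'" "B' \<subset> {1..n}"
  shows "gamma_kB n x k B' \<le> gamma_kB n x k B"
  unfolding gamma_kB_def using assms by (intro Max_mono) auto

lemma eps_op_antimono:
  assumes "a \<le> a'" "0 \<le> b"
  shows "eps_op a' b \<le> eps_op a b"
  using assms by (auto simp: eps_op_def)

lemma f_data_in:
  assumes "N \<ge> 1" "0 \<in> S" "\<And>k. k \<in> {1..N} \<Longrightarrow> alpha k \<in> S"
  shows "f_data n N x alpha B \<in> S"
proof -
  have "f_data n N x alpha B \<in> (\<lambda>k. eps_op (gamma_kB n x k B) (alpha k)) ` {1..N}"
    unfolding f_data_def using assms(1) by (intro Max_in) auto
  then show ?thesis
    using assms(2,3) by (auto simp: eps_op_def)
qed

lemma f_data_mono:
  assumes "N \<ge> 1" "\<And>k. k \<in> {1..N} \<Longrightarrow> 0 \<le> alpha k"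
    and "B \<subseteq> B'" "B' \<subset> {1..n}"
  shows "f_data n N x alpha B \<le> f_data n N x alpha B'"
proof -
  have "eps_op (gamma_kB n x k B) (alpha k) \<le> f_data n N x alpha B'" if k: "k \<in> {1..N}" for k
  proof -
    have "eps_op (gamma_kB n x k B) (alpha k) \<le> eps_op (gamma_kB n x k B') (alpha k)"
      using assms k by (intro eps_op_antimono gamma_kB_antimono) auto
    also have "\<dots> \<le> f_data n N x alpha B'"
      unfolding f_data_def using k by (intro Max_ge) auto
    finally show ?thesis .
  qed
  then show ?thesis
    unfolding f_data_def[of _ _ _ _ B] using assms(1) by (subst Max_le_iff) auto
qed

theorem proposition2:
  fixes n N q :: nat and L :: "real set"
    and x :: "nat \<Rightarrow> nat \<Rightarrow> real" and alpha :: "nat \<Rightarrow> real"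
  assumes L: "L = {0..1} \<or> (finite L \<and> 0 \<in> L \<and> 1 \<in> L \<and> L \<subseteq> {0..1})"
    and N: "N \<ge> 1"
    and data_x: "\<And>k i. k \<in> {1..N} \<Longrightarrow> i \<in> {1..n} \<Longrightarrow> x k i \<in> L"
    and data_alpha: "\<And>k. k \<in> {1..N} \<Longrightarrow> alpha k \<in> L"
    and q: "q \<in> {1..n}"
    and A': "\<exists>A'. A' \<subseteq> {1..n} \<and> card A' = n - q \<and> f_data n N x alpha A' = 0"
  shows "is_capacity n L (mu_wedge n q (f_data n N x alpha)) \<and>
         q_minitive n q (mu_wedge n q (f_data n N x alpha))"
proof -
  obtain A where A: "A \<subseteq> {1..n}" "card A = n - q" "f_data n N x alpha A = 0"
    using A' by blast
  have L_01: "0 \<in> L" "1 \<in> L" "L \<subseteq> {0..1}"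
    using L by auto
  have f_range: "f_data n N x alpha B \<in> L" for B
    using f_data_in[OF N L_01(1) data_alpha] .
  have alpha_nonneg: "0 \<le> alpha k" if "k \<in> {1..N}" for k
    using data_alpha[OF that] L_01(3) by auto
  have f_mono: "f_data n N x alpha B \<le> f_data n N x alpha B'"
    if "B \<subseteq> B'" "B' \<subset> {1..n}" for B B'
    using f_data_mono[OF N alpha_nonneg that] .
  have f_le_1: "f_data n N x alpha B \<le> 1" for B
    using f_range[of B] L_01(3) by auto
  have "is_capacity n L (mu_wedge n q (f_data n N x alpha))"
    using q f_range L_01(2,3) f_mono A by (rule is_capacity_mu_wedge)
  moreover have "q_minitive n q (mu_wedge n q (f_data n N x alpha))"
    using f_le_1 q by (simp add: mu_wedge_q_minitive)
  ultimately show ?thesis ..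
qed

end
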